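(* Let $(\Omega,\mathcal{F},\mathbb{P})$ be a probability space, let $\rho$ be a random variable on it with $\rho>0$ almost surely, $\mathbb{E}[\rho]<\infty$, and continuous CDF $F_\rho$ (i.e. $\rho$ has no atom), and set $\delta:=\mathbb{E}[\rho]$ and $\underline{\rho}:=\operatorname{essinf}\rho$. Let $m$ be a probability measure on $[0,1]$ and $x>0$. For a random variable $X$ define $$V(X):=\int_{[0,1]}F_X^{-1}(z)\,m(dz),$$ where $F_X^{-1}$ is the right-continuous quantile function of $X$, with $F_X^{-1}(0):=\lim_{z\downarrow0}F_X^{-1}(z)$ and $F_X^{-1}(1):=\lim_{z\uparrow1}F_X^{-1}(z)$. Consider the problem $$(P)\qquad \text{maximize } V(X)\ \text{ over random variables } X \text{ subject to } \mathbb{E}[\rho X]\le x,\ X\ge 0.$$ For $c\in(0,1)$ let $$\zeta(c):=\frac{m([c,1])}{\int_c^1F_\rho^{-1}(1-z)\,dz},\qquad \gamma^*:=\sup_{c\in(0,1)}\zeta(c).$$ Then the optimal value of $(P)$ is $\max(1/\delta,\gamma^* )\,x$. Furthermore: (i) If $\gamma^*=+\infty$, there exist $\beta_n\to\underline{\rho}$ such that $X_n:=k_n\mathbf{1}_{\{\rho\le\beta_n\}}$ with $k_n:=x/\mathbb{E}[\rho\mathbf{1}_{\{\rho\le\beta_n\}}]$ is feasible for $(P)$ and $V(X_n)\to+\infty$ as $n\to\infty$. (ii) If $\gamma^*\le 1/\delta$, then $X^*\equiv x/\delta$ is optimal for $(P)$. (iii) If $1/\delta<\gamma^*<+\infty$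 and the supremum defining $\gamma^*$ is attained at some $c^*\in(0,1)$, then $X^*:=k^*\mathbf{1}_{\{\rho\le\beta^*\}}$ with $\beta^*:=F_\rho^{-1}(1-c^* )$ and $k^*:=x/\mathbb{E}[\rho\mathbf{1}_{\{\rho\le\beta^*\}}]$ is optimal for $(P)$. (iv) If $1/\delta<\gamma^*<+\infty$ and the supremum defining $\gamma^*$ is not attained, then $(P)$ has no optimal solution. Furthermore, for any sequence $c_n\in(0,1)$ with $\zeta(c_n)\to\gamma^*$, setting $\beta_n:=F_\rho^{-1}(1-c_n)$, the payoffs $X_n:=k_n\mathbf{1}_{\{\rho\le\beta_n\}}$ with $k_n:=x/\mathbb{E}[\rho\mathbf{1}_{\{\rho\le\beta_n\}}]$ are feasible for $(P)$ and $V(X_n)$ converges to the optimal value as $n\to\infty$.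
   Context: $\rho$ is interpreted as the pricing kernel of a single-period complete market and $x$ as initial wealth. $F_\rho^{-1}$ denotes the right-continuous quantile function of $\rho$ (right-continuous inverse of its CDF). *)

theory Defs
  imports "HOL-Probability.Probability"
begin

definition cdfX :: "'a measure \<Rightarrow> ('a \<Rightarrow> real) \<Rightarrow> real \<Rightarrow> real" where
  "cdfX M X t = measure M {\<omega> \<in> space M. X \<omega> \<le> t}"

text \<open>Right-continuous quantile function, extended-real valued:
  for z in (0,1) it is inf {t. F t > z}; at 0 and 1 it is the limit from the right/left,
  which for the monotone quantile equals the inf/sup over (0,1).\<close>
definition quantile :: "'a measure \<Rightarrow> ('a \<Rightarrow> real) \<Rightarrow> real \<Rightarrow> ereal" where
  "quantile M X z =
     (if 0 < z \<and> z < 1 then ereal (Inf {t. cdfX M X t > z})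
      else if z = 0 then (INF u\<in>{0<..<1}. ereal (Inf {t. cdfX M X t > u}))
      else if z = 1 then (SUP u\<in>{0<..<1}. ereal (Inf {t. cdfX M X t > u}))
      else 0)"

definition essinf :: "'a measure \<Rightarrow> ('a \<Rightarrow> real) \<Rightarrow> ereal" where
  "essinf M f = Sup {z::ereal. AE \<omega> in M. z \<le> ereal (f \<omega>)}"

text \<open>Objective V(X) = integral over [0,1] of the quantile of X w.r.t. m
  (used for nonnegative X, whose quantile is nonnegative).\<close>
definition Vobj :: "real measure \<Rightarrow> 'a measure \<Rightarrow> ('a \<Rightarrow> real) \<Rightarrow> ennreal" where
  "Vobj m M X = (\<integral>\<^sup>+ z \<in> {0..1}. e2ennreal (quantile M X z) \<partial>m)"

definition feasible :: "'a measure \<Rightarrow> ('a \<Rightarrow> real) \<Rightarrow> real \<Rightarrow> ('a \<Rightarrow> real) \<Rightarrow> bool" where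
  "feasible M \<rho> x X \<longleftrightarrow> X \<in> borel_measurable M \<and> (AE \<omega> in M. X \<omega> \<ge> 0)
     \<and> (\<integral>\<^sup>+ \<omega>. ennreal (\<rho> \<omega> * X \<omega>) \<partial>M) \<le> ennreal x"

definition optval :: "real measure \<Rightarrow> 'a measure \<Rightarrow> ('a \<Rightarrow> real) \<Rightarrow> real \<Rightarrow> ennreal" where
  "optval m M \<rho> x = (SUP X \<in> {X. feasible M \<rho> x X}. Vobj m M X)"

definition optimal :: "real measure \<Rightarrow> 'a measure \<Rightarrow> ('a \<Rightarrow> real) \<Rightarrow> real \<Rightarrow> ('a \<Rightarrow> real) \<Rightarrow> bool" where
  "optimal m M \<rho> x X \<longleftrightarrow> feasible M \<rho> x X \<and>
     (\<forall>Y. feasible M \<rho> x Y \<longrightarrow> Vobj m M Y \<le> Vobj m M X)"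

definition zeta :: "real measure \<Rightarrow> 'a measure \<Rightarrow> ('a \<Rightarrow> real) \<Rightarrow> real \<Rightarrow> real" where
  "zeta m M \<rho> c = measure m {c..1} / (LBINT z=c..1. real_of_ereal (quantile M \<rho> (1 - z)))"

definition gammastar :: "real measure \<Rightarrow> 'a measure \<Rightarrow> ('a \<Rightarrow> real) \<Rightarrow> ereal" where
  "gammastar m M \<rho> = (SUP c\<in>{0<..<1}. ereal (zeta m M \<rho> c))"

definition digital :: "'a measure \<Rightarrow> ('a \<Rightarrow> real) \<Rightarrow> real \<Rightarrow> real \<Rightarrow> 'a \<Rightarrow> real" where
  "digital M \<rho> x \<beta> = (\<lambda>\<omega>. (x / (\<integral>\<omega>'. \<rho> \<omega>' * indicator {\<omega>'\<in>space M. \<rho> \<omega>' \<le> \<beta>} \<omega>' \<partial>M))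
       * indicator {\<omega>'\<in>space M. \<rho> \<omega>' \<le> \<beta>} \<omega>)"

end

theory Submission
  imports Defs
begin

text \<open>By the layer-cake formula,
  \<open>V(X) = \<integral>\<^sub>0\<^sup>\<infinity> m{z. F\<^sub>X\<^sup>-\<^sup>1(z) > t} dt \<le> \<integral>\<^sub>0\<^sup>\<infinity> m([F\<^sub>X(t), 1]) dt\<close> and
  \<open>E[\<rho> X] = \<integral>\<^sub>0\<^sup>\<infinity> E[\<rho> 1{X > t}] dt\<close>. The event \<open>{X > t}\<close> has probability \<open>1 - a\<close> with
  \<open>a = F\<^sub>X(t)\<close>, and among all events of that probability the cheapest one is
  \<open>{\<rho> \<le> F\<^sub>\<rho>\<^sup>-\<^sup>1(1 - a)}\<close>, whose price is \<open>\<integral>\<^sub>a\<^sup>1 F\<^sub>\<rho>\<^sup>-\<^sup>1(1 - z) dz\<close>. Hence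
  \<open>m([a, 1]) \<le> \<zeta>(a) E[\<rho> 1{X > t}]\<close> for \<open>0 < a < 1\<close>, while \<open>m([0, 1]) = E[\<rho>] / \<delta>\<close>;
  integrating in \<open>t\<close> gives \<open>V(X) \<le> max(1/\<delta>, \<gamma>\<^sup>*) x\<close>. Constants and digital payoffs
  \<open>k 1{\<rho> \<le> F\<^sub>\<rho>\<^sup>-\<^sup>1(1 - c)}\<close> have values \<open>x/\<delta>\<close> and \<open>x \<zeta>(c)\<close>, so the bound is the optimal value.
  If \<open>\<gamma>\<^sup>*\<close> is finite, exceeds \<open>1/\<delta>\<close> and is not attained, the layer inequality is strict
  wherever the layer is nonzero, so no payoff reaches the bound.\<close>

definition rquantile :: "'a measure \<Rightarrow> ('a \<Rightarrow> real) \<Rightarrow> real \<Rightarrow> real" where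
  "rquantile M X u = Inf {t. cdfX M X t > u}"

lemma quantile_eq_rquantile: "0 < u \<Longrightarrow> u < 1 \<Longrightarrow> quantile M X u = ereal (rquantile M X u)"
  by (simp add: quantile_def rquantile_def)

lemma quantile_0_eq_INF: "quantile M X 0 = (INF u\<in>{0<..<1}. ereal (rquantile M X u))"
  by (simp add: quantile_def rquantile_def)

lemma quantile_1_eq_SUP: "quantile M X 1 = (SUP u\<in>{0<..<1}. ereal (rquantile M X u))"
  by (simp add: quantile_def rquantile_def)

lemma ereal_less_of_ennreal_less_e2ennreal:
  assumes "0 \<le> t" "ennreal t < e2ennreal y"
  shows "ereal t < y"
proof (cases y)
  case (real r)
  then show ?thesis using assms by (auto simp: e2ennreal_ereal ennreal_less_iff)
next
  case MInf
  then show ?thesis using assms by (simp add: e2ennreal_neg)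
qed simp

context prob_space
begin

lemma cdfX_eq_cdf:
  assumes "X \<in> borel_measurable M"
  shows "cdfX M X = cdf (distr M borel X)"
  using assms by (auto simp: fun_eq_iff cdfX_def cdf_def measure_distr vimage_def Int_def conj_commute)

lemma cdfX_mono:
  assumes X: "X \<in> borel_measurable M" and "s \<le> t"
  shows "cdfX M X s \<le> cdfX M X t"
proof -
  interpret D: real_distribution "distr M borel X" using X by (rule real_distribution_distr)
  show ?thesis using assms D.cdf_nondecreasing by (simp add: cdfX_eq_cdf[OF X])
qed

lemma cdfX_tendsto_at_bot:
  assumes X: "X \<in> borel_measurable M"
  shows "(cdfX M X \<longlongrightarrow> 0) at_bot"
proof -
  interpret D: real_distribution "distr M borel X" using X by (rule real_distribution_distr)
  show ?thesis using D.cdf_lim_at_bot by (simp add: cdfX_eq_cdf[OF X])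
qed

lemma cdfX_tendsto_at_top:
  assumes X: "X \<in> borel_measurable M"
  shows "(cdfX M X \<longlongrightarrow> 1) at_top"
proof -
  interpret D: real_distribution "distr M borel X" using X by (rule real_distribution_distr)
  show ?thesis using D.cdf_lim_at_top_prob by (simp add: cdfX_eq_cdf[OF X])
qed

lemma prob_greater_eq_1_minus_cdfX:
  assumes "X \<in> borel_measurable M"
  shows "prob {\<omega>\<in>space M. t < X \<omega>} = 1 - cdfX M X t"
proof -
  have "{\<omega>\<in>space M. t < X \<omega>} = space M - {\<omega>\<in>space M. X \<omega> \<le> t}" by auto
  moreover have "{\<omega>\<in>space M. X \<omega> \<le> t} \<in> sets M" using assms by measurable
  ultimately show ?thesis by (simp add: prob_compl cdfX_def)
qed

lemma rquantile_set_nonempty: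
  assumes X: "X \<in> borel_measurable M" and "u < 1"
  shows "{t. cdfX M X t > u} \<noteq> {}"
proof -
  have "eventually (\<lambda>t. cdfX M X t > u) at_top"
    using order_tendstoD(1)[OF cdfX_tendsto_at_top[OF X] \<open>u < 1\<close>] .
  then show ?thesis by (auto dest: eventually_happens' [OF trivial_limit_at_top_linorder])
qed

lemma rquantile_set_bdd_below:
  assumes X: "X \<in> borel_measurable M" and "0 < u"
  shows "bdd_below {t. cdfX M X t > u}"
proof -
  have "eventually (\<lambda>t. cdfX M X t < u) at_bot"
    using order_tendstoD(2)[OF cdfX_tendsto_at_bot[OF X] \<open>0 < u\<close>] .
  then obtain y where y: "cdfX M X y < u"
    using eventually_happens' trivial_limit_at_bot_linorder by blast
  have "y \<le> t" if "cdfX M X t > u" for t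
    using that y cdfX_mono[OF X, of t y] by (cases "y \<le> t") auto
  then show ?thesis unfolding bdd_below_def by blast
qed

lemma rquantile_le:
  assumes X: "X \<in> borel_measurable M" and "0 < u" and "u < cdfX M X t"
  shows "rquantile M X u \<le> t"
  unfolding rquantile_def using assms rquantile_set_bdd_below[OF X] by (auto intro!: cInf_lower)

lemma le_rquantile:
  assumes X: "X \<in> borel_measurable M" and "u < 1" and "cdfX M X t \<le> u"
  shows "t \<le> rquantile M X u"
  unfolding rquantile_def
proof (rule cInf_greatest)
  show "{t. cdfX M X t > u} \<noteq> {}" using rquantile_set_nonempty[OF X \<open>u < 1\<close>] .
  show "t \<le> s" if "s \<in> {t. u < cdfX M X t}" for s
    using that assms cdfX_mono[OF X, of s t] by (cases "t \<le> s") auto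
qed

lemma cdfX_le_of_less_rquantile:
  assumes X: "X \<in> borel_measurable M" and "0 < u" and "t < rquantile M X u"
  shows "cdfX M X t \<le> u"
  using rquantile_le[OF X \<open>0 < u\<close>, of t] assms by force

lemma rquantile_mono:
  assumes X: "X \<in> borel_measurable M" and "0 < u" "u \<le> v" "v < 1"
  shows "rquantile M X u \<le> rquantile M X v"
  unfolding rquantile_def
  using assms rquantile_set_nonempty[OF X \<open>v < 1\<close>] rquantile_set_bdd_below[OF X \<open>0 < u\<close>]
  by (intro cInf_superset_mono) auto

lemma rquantile_borel_measurable:
  assumes X: "X \<in> borel_measurable M"
  shows "rquantile M X \<in> borel_measurable (restrict_space borel {0<..<1})"
  by (rule borel_measurable_mono_on_fnc) (auto simp: mono_on_def intro!: rquantile_mono[OF X])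

lemma quantile_borel_measurable:
  assumes X: "X \<in> borel_measurable M"
  shows "quantile M X \<in> borel_measurable borel"
proof -
  have eq: "quantile M X = (\<lambda>z. if z \<in> {0<..<1} then ereal (rquantile M X z) else
     (if z = 0 then quantile M X 0 else if z = 1 then quantile M X 1 else 0))"
    by (auto simp: quantile_def rquantile_def fun_eq_iff)
  have "{x. x \<in> {0<..<1::real}} = {0<..<1}" by auto
  then have "(\<lambda>z. ereal (rquantile M X z)) \<in> borel_measurable (restrict_space borel {z. z \<in> {0<..<1}})"
    using borel_measurable_ereal[OF rquantile_borel_measurable[OF X]] by simp
  moreover have "(\<lambda>z::real. if z = 0 then quantile M X 0 else if z = 1 then quantile M X 1 else 0)
       \<in> borel_measurable (restrict_space borel {z. z \<notin> {0<..<1}})"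
    by (rule measurable_restrict_space1) (intro measurable_If measurable_const; simp add: borel_closed)
  ultimately show ?thesis
    by (subst eq, subst measurable_If_restrict_space_iff) auto
qed

lemma cdfX_le_of_less_quantile:
  assumes X: "X \<in> borel_measurable M" and t: "0 \<le> t" and z: "0 \<le> z" "z \<le> 1"
    and less: "ennreal t < e2ennreal (quantile M X z)"
  shows "cdfX M X t \<le> z \<and> cdfX M X t < 1"
proof -
  have lt: "ereal t < quantile M X z" by (rule ereal_less_of_ennreal_less_e2ennreal[OF t less])
  consider "0 < z \<and> z < 1" | "z = 0" | "z = 1" using z by force
  then show ?thesis
  proof cases
    case 1
    then show ?thesis using lt cdfX_le_of_less_rquantile[OF X, of z t] by (simp add: quantile_eq_rquantile)
  next
    case 2
    then have below: "t < rquantile M X u" if "0 < u" "u < 1" for u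
      using lt that by (auto simp: quantile_0_eq_INF dest: less_INF_D)
    have "cdfX M X t \<le> 0"
    proof (rule ccontr)
      assume "\<not> cdfX M X t \<le> 0"
      define u where "u = min (cdfX M X t / 2) (1/2)"
      have u: "0 < u" "u < 1" "u < cdfX M X t" using \<open>\<not> cdfX M X t \<le> 0\<close> by (auto simp: u_def)
      then show False using cdfX_le_of_less_rquantile[OF X u(1) below[OF u(1,2)]] by simp
    qed
    then show ?thesis using 2 by simp
  next
    case 3
    then obtain u where "u \<in> {0<..<1}" "ereal t < ereal (rquantile M X u)"
      using lt by (auto simp: quantile_1_eq_SUP less_SUP_iff)
    then show ?thesis using 3 cdfX_le_of_less_rquantile[OF X, of u t] by simp
  qed
qed

lemma rquantile_binary:
  assumes X: "X \<in> borel_measurable M" and k: "k > 0"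
    and cdf: "\<And>t. cdfX M X t = (if t < 0 then 0 else if t < k then c else 1)"
    and u: "0 < u" "u < 1"
  shows "rquantile M X u = (if u < c then 0 else k)"
proof (cases "u < c")
  case True
  have "rquantile M X u \<le> 0" using rquantile_le[OF X u(1), of 0] cdf[of 0] True k by simp
  moreover have "t \<le> rquantile M X u" if "t < 0" for t
    using le_rquantile[OF X u(2), of t] cdf[of t] u that by simp
  ultimately show ?thesis using True by (simp add: dense_le antisym)
next
  case False
  have "rquantile M X u \<le> k" using rquantile_le[OF X u(1), of k] cdf[of k] u k by simp
  moreover have "t \<le> rquantile M X u" if "t < k" for t
    using le_rquantile[OF X u(2), of t] cdf[of t] False u that by auto
  ultimately show ?thesis using False by (simp add: dense_le antisym)
qed

lemma quantile_binary:
  assumes X: "X \<in> borel_measurable M" and c: "0 \<le> c" "c < 1" and k: "k > 0"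
    and cdf: "\<And>t. cdfX M X t = (if t < 0 then 0 else if t < k then c else 1)"
    and z: "0 \<le> z" "z \<le> 1"
  shows "quantile M X z = (if z < c then 0 else ereal k)"
proof -
  note Q = rquantile_binary[OF X k cdf]
  consider "0 < z \<and> z < 1" | "z = 0" "c = 0" | "z = 0" "c > 0" | "z = 1" using z c by force
  then show ?thesis
  proof cases
    case 1
    then show ?thesis using Q[of z] by (simp add: quantile_eq_rquantile)
  next
    case 2
    have "(INF u\<in>{0<..<1}. ereal (rquantile M X u)) = (INF u\<in>{0<..<1::real}. ereal k)"
      by (rule INF_cong) (use Q 2 in auto)
    then show ?thesis using 2 by (simp add: quantile_0_eq_INF)
  next
    case 3
    have "(INF u\<in>{0<..<1}. ereal (rquantile M X u)) \<le> ereal (rquantile M X (c/2))"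
      using 3 c by (intro INF_lower) auto
    also have "\<dots> = 0" using 3 c Q[of "c/2"] by simp
    finally have "(INF u\<in>{0<..<1}. ereal (rquantile M X u)) \<le> 0" .
    moreover have "0 \<le> (INF u\<in>{0<..<1}. ereal (rquantile M X u))"
      by (rule INF_greatest) (use Q k in auto)
    ultimately show ?thesis using 3 by (simp add: quantile_0_eq_INF antisym)
  next
    case 4
    have "(SUP u\<in>{0<..<1}. ereal (rquantile M X u)) \<le> ereal k"
      by (rule SUP_least) (use Q k in auto)
    moreover have "ereal (rquantile M X ((1 + c)/2)) \<le> (SUP u\<in>{0<..<1}. ereal (rquantile M X u))"
      using c by (intro SUP_upper) auto
    ultimately show ?thesis using 4 c Q[of "(1 + c)/2"] by (simp add: quantile_1_eq_SUP)
  qed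
qed

lemma Vobj_binary:
  assumes X: "X \<in> borel_measurable M" and c: "0 \<le> c" "c < 1" and k: "k > 0"
    and cdf: "\<And>t. cdfX M X t = (if t < 0 then 0 else if t < k then c else 1)"
    and sets_m: "sets m = sets borel"
  shows "Vobj m M X = ennreal k * emeasure m {c..1}"
proof -
  have "Vobj m M X = (\<integral>\<^sup>+z. ennreal k * indicator {c..1} z \<partial>m)"
    unfolding Vobj_def
    by (rule nn_integral_cong)
       (use quantile_binary[OF X c k cdf] c in \<open>auto split: split_indicator\<close>)
  also have "\<dots> = ennreal k * emeasure m {c..1}"
    by (rule nn_integral_cmult_indicator) (simp add: sets_m)
  finally show ?thesis .
qed

lemma essinf_le_rquantile:
  assumes X: "X \<in> borel_measurable M" and p: "0 < p" "p < 1"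
  shows "essinf M X \<le> ereal (rquantile M X p)"
  unfolding essinf_def
proof (rule Sup_least)
  fix z assume "z \<in> {z. AE \<omega> in M. z \<le> ereal (X \<omega>)}"
  then have z: "AE \<omega> in M. z \<le> ereal (X \<omega>)" by simp
  show "z \<le> ereal (rquantile M X p)"
  proof (cases z)
    case (real r)
    have "s \<le> rquantile M X p" if "s < r" for s
    proof -
      have "AE \<omega> in M. \<omega> \<notin> {\<omega>\<in>space M. X \<omega> \<le> s}"
        using z by eventually_elim (use \<open>s < r\<close> real in auto)
      moreover have "{\<omega>\<in>space M. X \<omega> \<le> s} \<in> events" using X by measurable
      ultimately have "cdfX M X s = 0" unfolding cdfX_def by (simp add: prob_eq_0)
      then show ?thesis using le_rquantile[OF X p(2), of s] p by simp
    qed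
    then show ?thesis unfolding real by (simp add: dense_le)
  next
    case PInf
    have "AE \<omega> in M. False" using z by eventually_elim (use PInf in simp)
    then show ?thesis by simp
  qed simp
qed

lemma rquantile_tendsto_essinf:
  assumes X: "X \<in> borel_measurable M"
    and p: "\<And>n. 0 < p n" "\<And>n. p n < 1" and lim: "p \<longlonglongrightarrow> 0"
  shows "(\<lambda>n. ereal (rquantile M X (p n))) \<longlonglongrightarrow> essinf M X"
proof (rule order_tendstoI)
  fix a assume "a < essinf M X"
  then have "a < ereal (rquantile M X (p n))" for n
    using essinf_le_rquantile[OF X p(1) p(2), of n] by (rule less_le_trans)
  then show "eventually (\<lambda>n. a < ereal (rquantile M X (p n))) sequentially" by simp
next
  fix a assume "essinf M X < a"
  then obtain s where s: "essinf M X < ereal s" "ereal s < a" using ereal_dense2 by blast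
  have not_AE: "\<not> (AE \<omega> in M. ereal s \<le> ereal (X \<omega>))"
  proof
    assume "AE \<omega> in M. ereal s \<le> ereal (X \<omega>)"
    then have "ereal s \<le> essinf M X" unfolding essinf_def by (intro Sup_upper) simp
    with s(1) show False by simp
  qed
  have "prob {\<omega>\<in>space M. X \<omega> < s} \<noteq> 0"
  proof
    assume "prob {\<omega>\<in>space M. X \<omega> < s} = 0"
    moreover have "{\<omega>\<in>space M. X \<omega> < s} \<in> events" using X by measurable
    ultimately have "AE \<omega> in M. \<omega> \<notin> {\<omega>\<in>space M. X \<omega> < s}" by (simp add: prob_eq_0)
    with AE_space have "AE \<omega> in M. ereal s \<le> ereal (X \<omega>)" by eventually_elim auto
    with not_AE show False by simp
  qed
  moreover have "prob {\<omega>\<in>space M. X \<omega> < s} \<le> cdfX M X s"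
    unfolding cdfX_def using X by (intro finite_measure_mono) auto
  ultimately have "cdfX M X s > 0" using measure_nonneg[of M "{\<omega>\<in>space M. X \<omega> < s}"] by linarith
  with lim have "eventually (\<lambda>n. p n < cdfX M X s) sequentially" by (rule order_tendstoD(2))
  then show "eventually (\<lambda>n. ereal (rquantile M X (p n)) < a) sequentially"
  proof eventually_elim
    case (elim n)
    then have "ereal (rquantile M X (p n)) \<le> ereal s" using rquantile_le[OF X p(1) elim] by simp
    then show ?case using s(2) by (rule le_less_trans)
  qed
qed

end

lemma emeasure_lborel_atLeast: "emeasure lborel {a::real..} = \<infinity>"
proof (rule ccontr)
  assume "emeasure lborel {a::real..} \<noteq> \<infinity>"
  then obtain r where r: "emeasure lborel {a::real..} = ennreal r" "0 \<le> r"
    using ennreal_cases[of "emeasure lborel {a::real..}"] by auto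
  have "emeasure lborel {a::real..<a+r+1} \<le> emeasure lborel {a::real..}"
    by (rule emeasure_mono) auto
  then show False using r by simp
qed

lemma emeasure_lborel_ennreal_below: "emeasure lborel {t::real. 0 \<le> t \<and> ennreal t < y} = y"
proof (cases "y = \<infinity>")
  case True
  then have "{t::real. 0 \<le> t \<and> ennreal t < y} = {0..}" by auto
  then show ?thesis using True emeasure_lborel_atLeast by simp
next
  case False
  then obtain r where r: "y = ennreal r" "0 \<le> r" using ennreal_cases[of y] by auto
  then have "{t::real. 0 \<le> t \<and> ennreal t < y} = {0..<r}" by (auto simp: ennreal_less_iff)
  then show ?thesis using r by simp
qed

lemma nn_integral_layer_cake:
  fixes f w :: "'a \<Rightarrow> ennreal"
  assumes N: "sigma_finite_measure N"
    and [measurable]: "f \<in> borel_measurable N" "w \<in> borel_measurable N"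
  shows "(\<integral>\<^sup>+\<omega>. w \<omega> * f \<omega> \<partial>N) =
         (\<integral>\<^sup>+t. (\<integral>\<^sup>+\<omega>. (if 0 \<le> t \<and> ennreal t < f \<omega> then w \<omega> else 0) \<partial>N) \<partial>lborel)"
proof -
  interpret pair_sigma_finite N lborel
    unfolding pair_sigma_finite_def using N by (simp add: lborel.sigma_finite_measure_axioms)
  have "w \<omega> * f \<omega> = (\<integral>\<^sup>+t. (if 0 \<le> t \<and> ennreal t < f \<omega> then w \<omega> else 0) \<partial>lborel)" for \<omega>
  proof -
    have "(\<integral>\<^sup>+t. (if 0 \<le> t \<and> ennreal t < f \<omega> then w \<omega> else 0) \<partial>lborel)
        = (\<integral>\<^sup>+t. w \<omega> * indicator {t::real. 0 \<le> t \<and> ennreal t < f \<omega>} t \<partial>lborel)"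
      by (rule nn_integral_cong) (auto split: split_indicator)
    then show ?thesis by (simp add: nn_integral_cmult_indicator emeasure_lborel_ennreal_below)
  qed
  then have "(\<integral>\<^sup>+\<omega>. w \<omega> * f \<omega> \<partial>N) =
      (\<integral>\<^sup>+\<omega>. (\<integral>\<^sup>+t. (if 0 \<le> t \<and> ennreal t < f \<omega> then w \<omega> else 0) \<partial>lborel) \<partial>N)"
    by simp
  also have "\<dots> = (\<integral>\<^sup>+t. (\<integral>\<^sup>+\<omega>. (if 0 \<le> t \<and> ennreal t < f \<omega> then w \<omega> else 0) \<partial>N) \<partial>lborel)"
    by (rule Fubini'[symmetric]) measurable
  finally show ?thesis .
qed

locale pricing_kernel = prob_space M for M :: "'a measure" +
  fixes \<rho> :: "'a \<Rightarrow> real"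
  assumes rho_measurable[measurable]: "\<rho> \<in> borel_measurable M"
    and rho_pos: "AE \<omega> in M. \<rho> \<omega> > 0"
    and rho_integrable: "integrable M \<rho>"
    and cdf_rho_continuous: "continuous_on UNIV (cdfX M \<rho>)"
begin

abbreviation "F \<equiv> cdfX M \<rho>"
abbreviation "Q \<equiv> rquantile M \<rho>"
abbreviation "\<delta> \<equiv> (\<integral>\<omega>. \<rho> \<omega> \<partial>M)"

definition price :: "'a set \<Rightarrow> real" where
  "price A = (\<integral>\<omega>. \<rho> \<omega> * indicator A \<omega> \<partial>M)"

abbreviation below :: "real \<Rightarrow> 'a set" where
  "below \<beta> \<equiv> {\<omega>\<in>space M. \<rho> \<omega> \<le> \<beta>}"

lemma prob_below: "prob (below \<beta>) = F \<beta>"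
  by (simp add: cdfX_def)

lemma F_rquantile:
  assumes u: "0 < u" "u < 1"
  shows "F (Q u) = u"
proof -
  have "isCont F (Q u)"
    using cdf_rho_continuous continuous_on_eq_continuous_at[OF open_UNIV] by blast
  then have lim_left: "(F \<longlongrightarrow> F (Q u)) (at_left (Q u))"
    and lim_right: "(F \<longlongrightarrow> F (Q u)) (at_right (Q u))"
    by (simp_all add: isCont_def filterlim_at_split)
  have "eventually (\<lambda>t. t \<in> {Q u - 1<..<Q u}) (at_left (Q u))"
    by (rule eventually_at_left_real) simp
  then have "eventually (\<lambda>t. F t \<le> u) (at_left (Q u))"
    by eventually_elim (auto intro: cdfX_le_of_less_rquantile[OF rho_measurable u(1)])
  with lim_left have "F (Q u) \<le> u"
    by (rule tendsto_upperbound) (simp add: trivial_limit_at_left_real)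
  moreover have "eventually (\<lambda>t. t \<in> {Q u<..<Q u + 1}) (at_right (Q u))"
    by (rule eventually_at_right_real) simp
  then have "eventually (\<lambda>t. u \<le> F t) (at_right (Q u))"
  proof eventually_elim
    case (elim t)
    then show ?case using le_rquantile[OF rho_measurable u(2), of t] by (cases "F t \<le> u") auto
  qed
  with lim_right have "u \<le> F (Q u)"
    by (rule tendsto_lowerbound) (simp add: trivial_limit_at_right_real)
  ultimately show ?thesis by simp
qed

lemma le_rquantile_iff:
  assumes u: "0 < u" "u < 1"
  shows "y \<le> Q u \<longleftrightarrow> F y \<le> u"
  using cdfX_mono[OF rho_measurable, of y "Q u"] F_rquantile[OF u] le_rquantile[OF rho_measurable u(2)]
  by auto

lemma rquantile_le_rquantile_iff:
  assumes "0 < u" "u < 1" "0 < v" "v < 1"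
  shows "Q u \<le> Q v \<longleftrightarrow> u \<le> v"
  using le_rquantile_iff[of v "Q u"] F_rquantile[of u] assms by simp

lemma rquantile_pos:
  assumes u: "0 < u" "u < 1"
  shows "Q u > 0"
proof -
  have "F 0 = 0"
    using rho_pos by (auto simp: cdfX_def intro!: prob_eq_0_AE)
  then show ?thesis using F_rquantile[OF u] le_rquantile_iff[OF u, of 0] u by (cases "Q u = 0") auto
qed

lemma distr_rquantile_eq_distr_rho:
  "distr (restrict_space lborel {0<..<1}) borel Q = distr M borel \<rho>"
proof (rule cdf_unique)
  let ?\<Omega> = "restrict_space lborel {0<..<1}::real measure"
  interpret \<Omega>: prob_space ?\<Omega>
    by (auto simp add: emeasure_restrict_space space_restrict_space intro!: prob_spaceI)
  have Q_measurable: "Q \<in> ?\<Omega> \<rightarrow>\<^sub>M borel"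
    using rquantile_borel_measurable[OF rho_measurable]
    by (simp add: measurable_cong_sets[OF sets_restrict_space_cong[OF sets_lborel] refl])
  show "real_distribution (distr ?\<Omega> borel Q)"
    using Q_measurable by (rule \<Omega>.real_distribution_distr)
  show "real_distribution (distr M borel \<rho>)"
    by (rule real_distribution_distr) simp
  show "cdf (distr ?\<Omega> borel Q) = cdf (distr M borel \<rho>)"
  proof
    fix y
    let ?A = "{u\<in>{0<..<1}. Q u \<le> y}"
    have F01: "0 \<le> F y" "F y \<le> 1" by (simp_all add: cdfX_def)
    have A_eq: "Q -` {..y} \<inter> space ?\<Omega> = ?A" by (auto simp: space_restrict_space)
    have "Q -` {..y} \<inter> space ?\<Omega> \<in> sets ?\<Omega>" by (rule measurable_sets[OF Q_measurable]) simp
    then have A_sets: "?A \<in> sets lborel"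
      unfolding A_eq by (subst (asm) sets_restrict_space_iff) (auto simp: space_restrict_space)
    have "{0<..<F y} \<subseteq> ?A"
      using F01 rquantile_le[OF rho_measurable, of _ y] by auto
    then have "emeasure lborel {0<..<F y} \<le> emeasure lborel ?A"
      using A_sets by (rule emeasure_mono)
    moreover have "?A \<subseteq> {0<..F y}"
      using F_rquantile cdfX_mono[OF rho_measurable] by fastforce
    then have "emeasure lborel ?A \<le> emeasure lborel {0<..F y}"
      by (rule emeasure_mono) simp
    ultimately have "emeasure lborel ?A = ennreal (F y)"
      using F01 by (intro antisym) auto
    then have "measure lborel ?A = F y" using F01 by (simp add: measure_def)
    have "cdf (distr ?\<Omega> borel Q) y = measure ?\<Omega> (Q -` {..y} \<inter> space ?\<Omega>)"
      using Q_measurable by (simp add: cdf_def measure_distr)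
    also have "\<dots> = measure lborel ?A"
      unfolding A_eq by (rule measure_restrict_space) auto
    also have "\<dots> = cdf (distr M borel \<rho>) y"
      using \<open>measure lborel ?A = F y\<close> cdfX_eq_cdf[OF rho_measurable] by simp
    finally show "cdf (distr ?\<Omega> borel Q) y = cdf (distr M borel \<rho>) y" .
  qed
qed

lemma nn_integral_rho_eq_rquantile:
  assumes [measurable]: "g \<in> borel_measurable borel"
  shows "(\<integral>\<^sup>+\<omega>. g (\<rho> \<omega>) \<partial>M) = (\<integral>\<^sup>+u. g (Q u) * indicator {0<..<1} u \<partial>lborel)"
proof -
  let ?\<Omega> = "restrict_space lborel {0<..<1}::real measure"
  have "(\<integral>\<^sup>+\<omega>. g (\<rho> \<omega>) \<partial>M) = integral\<^sup>N (distr M borel \<rho>) g"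
    by (simp add: nn_integral_distr)
  also have "\<dots> = integral\<^sup>N (distr ?\<Omega> borel Q) g"
    by (simp add: distr_rquantile_eq_distr_rho)
  also have "\<dots> = (\<integral>\<^sup>+u. g (Q u) \<partial>?\<Omega>)"
    using rquantile_borel_measurable[OF rho_measurable]
    by (simp add: nn_integral_distr measurable_cong_sets[OF sets_restrict_space_cong[OF sets_lborel] refl])
  also have "\<dots> = (\<integral>\<^sup>+u. g (Q u) * indicator {0<..<1} u \<partial>lborel)"
    by (rule nn_integral_restrict_space) simp
  finally show ?thesis .
qed

lemma integrable_price:
  assumes "A \<in> sets M"
  shows "integrable M (\<lambda>\<omega>. \<rho> \<omega> * indicator A \<omega>)"
  using integrable_mult_indicator[OF assms rho_integrable] by (simp add: mult.commute)

lemma AE_price_integrand_nonneg: "AE \<omega> in M. 0 \<le> \<rho> \<omega> * indicator A \<omega>"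
  using rho_pos by eventually_elim auto

lemma price_nonneg: "0 \<le> price A"
  unfolding price_def by (rule integral_nonneg_AE[OF AE_price_integrand_nonneg])

lemma ennreal_price:
  assumes "A \<in> sets M"
  shows "ennreal (price A) = (\<integral>\<^sup>+\<omega>. ennreal (\<rho> \<omega> * indicator A \<omega>) \<partial>M)"
  unfolding price_def
  by (rule nn_integral_eq_integral[symmetric, OF integrable_price[OF assms] AE_price_integrand_nonneg])

lemma price_pos:
  assumes A: "A \<in> sets M" and "prob A > 0"
  shows "price A > 0"
proof (rule ccontr)
  assume "\<not> price A > 0"
  then have "price A = 0" using price_nonneg[of A] by simp
  then have "AE \<omega> in M. \<rho> \<omega> * indicator A \<omega> = 0"
    using integral_nonneg_eq_0_iff_AE[OF integrable_price[OF A] AE_price_integrand_nonneg]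
    by (simp add: price_def)
  then have "AE \<omega> in M. \<omega> \<notin> A"
    using rho_pos by eventually_elim (auto split: split_indicator)
  then have "prob A = 0" using A by (subst prob_eq_0) auto
  with \<open>prob A > 0\<close> show False by simp
qed

lemma price_eq_delta:
  assumes "A \<in> sets M" "prob A = 1"
  shows "price A = \<delta>"
  unfolding price_def
  by (rule integral_cong_AE) (use AE_prob_1[OF assms(2)] assms(1) in \<open>auto elim: AE_mp\<close>)

lemma delta_pos: "\<delta> > 0"
  using price_pos[of "space M"] price_eq_delta[of "space M"] by (simp add: prob_space)

lemma price_below_rquantile_pos:
  assumes "0 < p" "p < 1"
  shows "price (below (Q p)) > 0"
  using price_pos[of "below (Q p)"] F_rquantile[OF assms] assms by (simp add: prob_below)

lemma price_below_mono:
  assumes "\<beta> \<le> \<beta>'"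
  shows "price (below \<beta>) \<le> price (below \<beta>')"
  unfolding price_def using rho_pos assms
  by (intro integral_mono_AE integrable_price) (auto split: split_indicator elim: AE_mp)

text \<open>Integrate \<open>(\<rho> - \<beta>) (1\<^sub>B - 1\<^sub>A) \<le> 0\<close> for \<open>B = {\<rho> \<le> \<beta>}\<close> and use \<open>P(A) = P(B)\<close>.\<close>

lemma price_below_le:
  assumes A: "A \<in> sets M" and prob_A: "prob A = F \<beta>"
  shows "price (below \<beta>) \<le> price A"
proof -
  have B: "below \<beta> \<in> sets M" by measurable
  have "(\<integral>\<omega>. \<rho> \<omega> * indicator (below \<beta>) \<omega> + \<beta> * indicator A \<omega> \<partial>M)
      \<le> (\<integral>\<omega>. \<rho> \<omega> * indicator A \<omega> + \<beta> * indicator (below \<beta>) \<omega> \<partial>M)"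
    using A B
    by (intro integral_mono Bochner_Integration.integrable_add integrable_price integrable_mult_right
        integrable_real_indicator) (auto split: split_indicator simp: less_top[symmetric])
  also have "(\<integral>\<omega>. \<rho> \<omega> * indicator A \<omega> + \<beta> * indicator (below \<beta>) \<omega> \<partial>M) = price A + \<beta> * F \<beta>"
    using A B unfolding price_def prob_below[symmetric]
    by (subst Bochner_Integration.integral_add)
      (auto intro!: integrable_price integrable_real_indicator simp: less_top[symmetric])
  also have "(\<integral>\<omega>. \<rho> \<omega> * indicator (below \<beta>) \<omega> + \<beta> * indicator A \<omega> \<partial>M) = price (below \<beta>) + \<beta> * F \<beta>"
    using A B unfolding price_def prob_A[symmetric]
    by (subst Bochner_Integration.integral_add)
      (auto intro!: integrable_price integrable_real_indicator simp: less_top[symmetric])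
  finally show ?thesis by simp
qed

lemma ennreal_price_below_rquantile:
  assumes p: "0 < p" "p < 1"
  shows "ennreal (price (below (Q p))) = (\<integral>\<^sup>+u. ennreal (indicator {0<..<p} u * Q u) \<partial>lborel)"
proof -
  have "ennreal (price (below (Q p))) = (\<integral>\<^sup>+\<omega>. ennreal (\<rho> \<omega> * indicator {..Q p} (\<rho> \<omega>)) \<partial>M)"
    by (subst ennreal_price) (auto intro!: nn_integral_cong split: split_indicator)
  also have "\<dots> = (\<integral>\<^sup>+u. ennreal (Q u * indicator {..Q p} (Q u)) * indicator {0<..<1} u \<partial>lborel)"
    by (rule nn_integral_rho_eq_rquantile) measurable
  also have "\<dots> = (\<integral>\<^sup>+u. ennreal (indicator {0<..<p} u * Q u) \<partial>lborel)"
    using AE_lborel_singleton[of p]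
  proof (intro nn_integral_cong_AE, eventually_elim)
    case (elim u)
    show ?case
    proof (cases "0 < u \<and> u < 1")
      case True
      then show ?thesis using elim p rquantile_le_rquantile_iff[of u p] by (auto split: split_indicator)
    qed (use p in \<open>auto split: split_indicator\<close>)
  qed
  finally show ?thesis .
qed

lemma interval_integral_quantile_eq_price:
  assumes c: "0 < c" "c < 1"
  shows "(LBINT z=c..1. real_of_ereal (quantile M \<rho> (1 - z))) = price (below (Q (1 - c)))"
proof -
  have [measurable]: "quantile M \<rho> \<in> borel_measurable borel"
    by (rule quantile_borel_measurable[OF rho_measurable])
  define f where "f z = indicator {c<..<1} z * real_of_ereal (quantile M \<rho> (1 - z))" for z
  have f_eq: "f z = indicator {c<..<1} z * Q (1 - z)" for z
    using c by (cases "c < z \<and> z < 1") (auto simp: f_def quantile_eq_rquantile split: split_indicator)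
  have [measurable]: "f \<in> borel_measurable borel" unfolding f_def by measurable
  have f_nonneg: "0 \<le> f z" for z
    using rquantile_pos[of "1 - z"] c by (auto simp: f_eq split: split_indicator)
  have "einterval (ereal c) 1 = {c<..<1}" by (auto simp: einterval_def)
  then have "(LBINT z=c..1. real_of_ereal (quantile M \<rho> (1 - z))) = (\<integral>z. f z \<partial>lborel)"
    using c by (simp add: interval_lebesgue_integral_def set_lebesgue_integral_def f_def)
  also have "\<dots> = enn2real (\<integral>\<^sup>+z. ennreal (f z) \<partial>lborel)"
    by (intro integral_eq_nn_integral AE_I2 f_nonneg) simp
  also have "(\<integral>\<^sup>+z. ennreal (f z) \<partial>lborel) = (\<integral>\<^sup>+u. ennreal (f (1 + (-1) * u)) \<partial>lborel)"
    by (subst nn_integral_real_affine[where c="-1" and t=1]) (auto simp: f_def)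
  also have "\<dots> = (\<integral>\<^sup>+u. ennreal (indicator {0<..<1 - c} u * Q u) \<partial>lborel)"
    by (intro nn_integral_cong) (auto simp: f_eq split: split_indicator)
  also have "\<dots> = ennreal (price (below (Q (1 - c))))"
    using ennreal_price_below_rquantile[of "1 - c"] c by simp
  finally show ?thesis using price_nonneg by simp
qed

lemma digital_eq: "digital M \<rho> x \<beta> = (\<lambda>\<omega>. x / price (below \<beta>) * indicator (below \<beta>) \<omega>)"
  by (simp add: digital_def price_def)

lemma digital_feasible:
  assumes x: "x > 0" and p: "0 < p" "p < 1"
  shows "feasible M \<rho> x (digital M \<rho> x (Q p))"
proof -
  let ?B = "below (Q p)"
  have e: "price ?B > 0" by (rule price_below_rquantile_pos[OF p])
  have "(\<integral>\<^sup>+\<omega>. ennreal (\<rho> \<omega> * (x / price ?B * indicator ?B \<omega>)) \<partial>M)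
      = (\<integral>\<^sup>+\<omega>. ennreal (x / price ?B) * ennreal (\<rho> \<omega> * indicator ?B \<omega>) \<partial>M)"
    using rho_pos e x
    by (intro nn_integral_cong_AE) (auto simp: ennreal_mult[symmetric] ac_simps elim: AE_mp)
  also have "\<dots> = ennreal (x / price ?B) * ennreal (price ?B)"
    by (subst nn_integral_cmult) (auto simp: ennreal_price)
  also have "\<dots> = ennreal x" using e x by (simp add: ennreal_mult[symmetric])
  finally show ?thesis
    unfolding feasible_def digital_eq using e x by (auto intro!: AE_I2)
qed

lemma cdfX_digital:
  assumes x: "x > 0" and p: "0 < p" "p < 1"
  shows "cdfX M (digital M \<rho> x (Q p)) t
    = (if t < 0 then 0 else if t < x / price (below (Q p)) then 1 - p else 1)"
proof -
  let ?B = "below (Q p)"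
  let ?k = "x / price ?B"
  have k: "?k > 0" using price_below_rquantile_pos[OF p] x by simp
  have B: "?B \<in> sets M" by measurable
  have "prob (space M - ?B) = 1 - p"
    using prob_compl[OF B] prob_below F_rquantile[OF p] by simp
  moreover have "{\<omega>\<in>space M. ?k * indicator ?B \<omega> \<le> t}
      = (if t < 0 then {} else if t < ?k then space M - ?B else space M)"
    using k by (auto split: split_indicator)
  ultimately show ?thesis
    by (simp add: cdfX_def digital_eq prob_space)
qed

lemma Vobj_digital:
  assumes x: "x > 0" and p: "0 < p" "p < 1" and sets_m: "sets m = sets borel"
  shows "Vobj m M (digital M \<rho> x (Q p)) = ennreal (x / price (below (Q p))) * emeasure m {1 - p..1}"
proof (rule Vobj_binary[OF _ _ _ _ cdfX_digital[OF x p] sets_m])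
  show "digital M \<rho> x (Q p) \<in> borel_measurable M" unfolding digital_eq by measurable
  show "x / price (below (Q p)) > 0" using price_below_rquantile_pos[OF p] x by simp
qed (use p in auto)

lemma constant_feasible:
  assumes x: "x > 0"
  shows "feasible M \<rho> x (\<lambda>_. x / \<delta>)"
proof -
  have "(\<integral>\<^sup>+\<omega>. ennreal (\<rho> \<omega> * (x / \<delta>)) \<partial>M) = (\<integral>\<^sup>+\<omega>. ennreal (x / \<delta>) * ennreal (\<rho> \<omega> * indicator (space M) \<omega>) \<partial>M)"
    using rho_pos delta_pos x
    by (intro nn_integral_cong_AE) (auto simp: ennreal_mult[symmetric] ac_simps elim: AE_mp)
  also have "\<dots> = ennreal (x / \<delta>) * ennreal \<delta>"
    by (subst nn_integral_cmult) (auto simp: ennreal_price[symmetric] price_eq_delta prob_space)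
  also have "\<dots> = ennreal x" using delta_pos x by (simp add: ennreal_mult[symmetric])
  finally show ?thesis unfolding feasible_def using delta_pos x by (auto intro!: AE_I2)
qed

end

locale quantile_maximization = pricing_kernel M \<rho> for M :: "'a measure" and \<rho> +
  fixes m :: "real measure"
  assumes m_prob_space: "prob_space m" and sets_m: "sets m = sets borel"
    and measure_m_01: "measure m {0..1} = 1"
begin

interpretation m: prob_space m by (rule m_prob_space)

abbreviation "\<zeta> \<equiv> zeta m M \<rho>"
abbreviation "\<gamma> \<equiv> gammastar m M \<rho>"

lemma zeta_eq:
  assumes "0 < c" "c < 1"
  shows "\<zeta> c = measure m {c..1} / price (below (Q (1 - c)))"
  unfolding zeta_def using interval_integral_quantile_eq_price[OF assms] by simp

lemma zeta_nonneg: "0 < c \<Longrightarrow> c < 1 \<Longrightarrow> 0 \<le> \<zeta> c"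
  using zeta_eq[of c] price_nonneg by simp

lemma measure_eq_zeta_price:
  assumes "0 < c" "c < 1"
  shows "measure m {c..1} = \<zeta> c * price (below (Q (1 - c)))"
  using zeta_eq[OF assms] price_below_rquantile_pos[of "1 - c"] assms by simp

lemma zeta_le_gammastar: "0 < c \<Longrightarrow> c < 1 \<Longrightarrow> ereal (\<zeta> c) \<le> \<gamma>"
  unfolding gammastar_def by (rule SUP_upper) simp

lemma gammastar_neq_MInf: "\<gamma> \<noteq> -\<infinity>"
  using zeta_le_gammastar[of "1/2"] by auto

lemma zeta_le_inverse_price:
  assumes c0: "0 < c0" "c0 < 1" and c: "0 < c" "c \<le> c0"
  shows "\<zeta> c \<le> 1 / price (below (Q (1 - c0)))"
proof -
  have "0 < price (below (Q (1 - c0)))" using price_below_rquantile_pos[of "1 - c0"] c0 by simp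
  moreover have "price (below (Q (1 - c0))) \<le> price (below (Q (1 - c)))"
    using c c0 by (intro price_below_mono rquantile_mono[OF rho_measurable]) auto
  ultimately show ?thesis
    using zeta_eq[of c] c c0 by (auto intro!: frac_le)
qed

lemma measure_tail_le_zeta_price:
  assumes A: "A \<in> sets M" and a: "0 < a" "a < 1" and prob_A: "prob A = 1 - a"
  shows "measure m {a..1} \<le> \<zeta> a * price A"
proof -
  have "price (below (Q (1 - a))) \<le> price A"
    using price_below_le[OF A] F_rquantile[of "1 - a"] prob_A a by simp
  then show ?thesis
    using measure_eq_zeta_price[OF a] zeta_nonneg[OF a] by (simp add: mult_left_mono)
qed

lemma measure_tail_le_max_price:
  assumes \<gamma>: "\<gamma> = ereal g" and A: "A \<in> sets M"
    and a: "0 \<le> a" "a < 1" and prob_A: "prob A = 1 - a"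
  shows "measure m {a..1} \<le> max (1/\<delta>) g * price A"
proof (cases "a = 0")
  case True
  then have "measure m {a..1} = 1/\<delta> * price A"
    using price_eq_delta[OF A] prob_A measure_m_01 delta_pos by simp
  then show ?thesis using mult_right_mono[OF max.cobounded1[of "1/\<delta>" g] price_nonneg[of A]] by simp
next
  case False
  then have "measure m {a..1} \<le> \<zeta> a * price A"
    using measure_tail_le_zeta_price[OF A _ a(2) prob_A] a by simp
  also have "\<dots> \<le> max (1/\<delta>) g * price A"
    using zeta_le_gammastar[of a] False a \<gamma> price_nonneg[of A] by (intro mult_right_mono) auto
  finally show ?thesis .
qed

lemma measure_tail_less_gammastar_price:
  assumes \<gamma>: "\<gamma> = ereal g" and gt: "1/\<delta> < g" and not_attained: "\<forall>c\<in>{0<..<1}. \<zeta> c \<noteq> g"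
    and A: "A \<in> sets M" and a: "0 \<le> a" "a < 1" and prob_A: "prob A = 1 - a"
  shows "measure m {a..1} < g * price A"
proof (cases "a = 0")
  case True
  then have "measure m {a..1} = 1/\<delta> * \<delta>" and "price A = \<delta>"
    using price_eq_delta[OF A] prob_A measure_m_01 delta_pos by simp_all
  then show ?thesis using gt delta_pos by (simp add: pos_divide_less_eq)
next
  case False
  then have "measure m {a..1} \<le> \<zeta> a * price A"
    using measure_tail_le_zeta_price[OF A _ a(2) prob_A] a by simp
  also have "\<dots> < g * price A"
  proof (rule mult_strict_right_mono)
    have "\<zeta> a \<le> g" "\<zeta> a \<noteq> g"
      using zeta_le_gammastar[of a] not_attained False a \<gamma> by auto
    then show "\<zeta> a < g" by simp
    show "0 < price A" using price_pos[OF A] prob_A a by simp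
  qed
  finally show ?thesis .
qed

definition value_layer :: "('a \<Rightarrow> real) \<Rightarrow> real \<Rightarrow> ennreal" where
  "value_layer X t = (\<integral>\<^sup>+z. (if 0 \<le> t \<and> ennreal t < e2ennreal (quantile M X z)
      then indicator {0..1} z else 0) \<partial>m)"

definition cost_layer :: "('a \<Rightarrow> real) \<Rightarrow> real \<Rightarrow> ennreal" where
  "cost_layer X t = (\<integral>\<^sup>+\<omega>. (if 0 \<le> t \<and> ennreal t < ennreal (X \<omega>) then ennreal (\<rho> \<omega>) else 0) \<partial>M)"

lemma value_layer_eq_0:
  assumes X: "X \<in> borel_measurable M" and "\<not> (0 \<le> t \<and> cdfX M X t < 1)"
  shows "value_layer X t = 0"
  unfolding value_layer_def
  by (intro nn_integral_zero' AE_I2)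
     (use cdfX_le_of_less_quantile[OF X, of t] assms(2) in \<open>auto split: split_indicator\<close>)

lemma value_layer_le_measure:
  assumes X: "X \<in> borel_measurable M" and t: "0 \<le> t"
  shows "value_layer X t \<le> ennreal (measure m {cdfX M X t..1})"
proof -
  have "value_layer X t \<le> (\<integral>\<^sup>+z. indicator {cdfX M X t..1} z \<partial>m)"
    unfolding value_layer_def
    by (rule nn_integral_mono)
       (use cdfX_le_of_less_quantile[OF X t] in \<open>auto split: split_indicator\<close>)
  also have "\<dots> = ennreal (measure m {cdfX M X t..1})"
    by (simp add: sets_m m.emeasure_eq_measure)
  finally show ?thesis .
qed

lemma cost_layer_eq_price:
  assumes X: "X \<in> borel_measurable M" and t: "0 \<le> t"
  shows "cost_layer X t = ennreal (price {\<omega>\<in>space M. t < X \<omega>})"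
  unfolding cost_layer_def using X t
  by (subst ennreal_price) (auto intro!: nn_integral_cong simp: ennreal_less_iff split: split_indicator)

lemma value_layer_le_cost_layer:
  assumes \<gamma>: "\<gamma> = ereal g" and X: "X \<in> borel_measurable M"
  shows "value_layer X t \<le> ennreal (max (1/\<delta>) g) * cost_layer X t"
proof (cases "0 \<le> t \<and> cdfX M X t < 1")
  case True
  let ?A = "{\<omega>\<in>space M. t < X \<omega>}"
  have A: "?A \<in> sets M" using X by measurable
  have "value_layer X t \<le> ennreal (measure m {cdfX M X t..1})"
    using value_layer_le_measure[OF X] True by simp
  also have "\<dots> \<le> ennreal (max (1/\<delta>) g * price ?A)"
    using measure_tail_le_max_price[OF \<gamma> A, of "cdfX M X t"] True
      prob_greater_eq_1_minus_cdfX[OF X, of t]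
    by (simp add: cdfX_def ennreal_leI)
  also have "\<dots> = ennreal (max (1/\<delta>) g) * cost_layer X t"
    using cost_layer_eq_price[OF X] True delta_pos price_nonneg
    by (subst ennreal_mult) (auto simp: le_max_iff_disj)
  finally show ?thesis .
qed (simp add: value_layer_eq_0[OF X])

lemma value_layer_less_cost_layer:
  assumes \<gamma>: "\<gamma> = ereal g" and gt: "1/\<delta> < g" and not_attained: "\<forall>c\<in>{0<..<1}. \<zeta> c \<noteq> g"
    and X: "X \<in> borel_measurable M" and t: "0 \<le> t" "cdfX M X t < 1"
  shows "value_layer X t < ennreal g * cost_layer X t"
proof -
  let ?A = "{\<omega>\<in>space M. t < X \<omega>}"
  have A: "?A \<in> sets M" using X by measurable
  have "value_layer X t \<le> ennreal (measure m {cdfX M X t..1})"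
    using value_layer_le_measure[OF X t(1)] .
  also have "\<dots> < ennreal (g * price ?A)"
  proof -
    have "measure m {cdfX M X t..1} < g * price ?A"
      using measure_tail_less_gammastar_price[OF \<gamma> gt not_attained A, of "cdfX M X t"] t
        prob_greater_eq_1_minus_cdfX[OF X, of t]
      by (simp add: cdfX_def)
    then show ?thesis by (intro ennreal_lessI le_less_trans[OF measure_nonneg])
  qed
  also have "\<dots> = ennreal g * cost_layer X t"
  proof -
    have "0 < 1/\<delta>" using delta_pos by simp
    then have "0 \<le> g" using gt by linarith
    then show ?thesis
      using cost_layer_eq_price[OF X t(1)] price_nonneg by (simp add: ennreal_mult)
  qed
  finally show ?thesis .
qed

lemma Vobj_eq_integral_value_layer:
  assumes X: "X \<in> borel_measurable M"
  shows "Vobj m M X = (\<integral>\<^sup>+t. value_layer X t \<partial>lborel)"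
proof -
  have [measurable]: "quantile M X \<in> borel_measurable borel"
    by (rule quantile_borel_measurable[OF X])
  have "Vobj m M X = (\<integral>\<^sup>+z. indicator {0..1} z * e2ennreal (quantile M X z) \<partial>m)"
    unfolding Vobj_def by (simp add: mult.commute)
  also have "\<dots> = (\<integral>\<^sup>+t. value_layer X t \<partial>lborel)"
    unfolding value_layer_def
    by (rule nn_integral_layer_cake[OF m.sigma_finite_measure_axioms])
       (simp_all add: measurable_cong_sets[OF sets_m refl])
  finally show ?thesis .
qed

lemma value_layer_measurable:
  assumes X: "X \<in> borel_measurable M"
  shows "value_layer X \<in> borel_measurable lborel"
proof -
  have [measurable]: "quantile M X \<in> borel_measurable borel"
    by (rule quantile_borel_measurable[OF X])
  have pair_sets: "lborel \<Otimes>\<^sub>M m \<rightarrow>\<^sub>M (borel::ennreal measure) = lborel \<Otimes>\<^sub>M (borel::real measure) \<rightarrow>\<^sub>M borel"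
    by (rule measurable_cong_sets) (auto intro!: sets_pair_measure_cong simp: sets_m)
  show ?thesis
    unfolding value_layer_def
    by (rule m.borel_measurable_nn_integral) (unfold pair_sets, measurable)
qed

lemma cost_layer_measurable:
  assumes X: "X \<in> borel_measurable M"
  shows "cost_layer X \<in> borel_measurable lborel"
  unfolding cost_layer_def by (intro borel_measurable_nn_integral) (use X in measurable)

lemma integral_cost_layer_le:
  assumes feasible: "feasible M \<rho> x X"
  shows "(\<integral>\<^sup>+t. cost_layer X t \<partial>lborel) \<le> ennreal x"
proof -
  have X: "X \<in> borel_measurable M" and X_nonneg: "AE \<omega> in M. 0 \<le> X \<omega>"
    using feasible by (simp_all add: feasible_def)
  have "(\<integral>\<^sup>+t. cost_layer X t \<partial>lborel) = (\<integral>\<^sup>+\<omega>. ennreal (\<rho> \<omega>) * ennreal (X \<omega>) \<partial>M)"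
    unfolding cost_layer_def
    by (rule nn_integral_layer_cake[OF sigma_finite_measure_axioms, symmetric]) (use X in measurable)
  also have "\<dots> = (\<integral>\<^sup>+\<omega>. ennreal (\<rho> \<omega> * X \<omega>) \<partial>M)"
    using X_nonneg rho_pos by (intro nn_integral_cong_AE) (auto simp: ennreal_mult elim: AE_mp)
  also have "\<dots> \<le> ennreal x" using feasible by (simp add: feasible_def)
  finally show ?thesis .
qed

lemma Vobj_le_max:
  assumes \<gamma>: "\<gamma> = ereal g" and feasible: "feasible M \<rho> x X"
  shows "Vobj m M X \<le> ennreal (max (1/\<delta>) g) * ennreal x"
proof -
  have X: "X \<in> borel_measurable M" using feasible by (simp add: feasible_def)
  have "Vobj m M X = (\<integral>\<^sup>+t. value_layer X t \<partial>lborel)"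
    by (rule Vobj_eq_integral_value_layer[OF X])
  also have "\<dots> \<le> (\<integral>\<^sup>+t. ennreal (max (1/\<delta>) g) * cost_layer X t \<partial>lborel)"
    by (intro nn_integral_mono value_layer_le_cost_layer[OF \<gamma> X])
  also have "\<dots> = ennreal (max (1/\<delta>) g) * (\<integral>\<^sup>+t. cost_layer X t \<partial>lborel)"
    by (rule nn_integral_cmult[OF cost_layer_measurable[OF X]])
  also have "\<dots> \<le> ennreal (max (1/\<delta>) g) * ennreal x"
    by (intro mult_left_mono integral_cost_layer_le[OF feasible]) simp
  finally show ?thesis .
qed

lemma Vobj_eq_0_if_AE_cost_layer_le:
  assumes \<gamma>: "\<gamma> = ereal g" and gt: "1/\<delta> < g" and not_attained: "\<forall>c\<in>{0<..<1}. \<zeta> c \<noteq> g"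
    and X: "X \<in> borel_measurable M"
    and AE_le: "AE t in lborel. ennreal g * cost_layer X t \<le> value_layer X t"
  shows "Vobj m M X = 0"
proof -
  have "AE t in lborel. value_layer X t = 0"
    using AE_le
  proof eventually_elim
    case (elim t)
    show ?case
    proof (cases "0 \<le> t \<and> cdfX M X t < 1")
      case True
      then show ?thesis
        using value_layer_less_cost_layer[OF \<gamma> gt not_attained X, of t] elim by (auto dest: leD)
    qed (rule value_layer_eq_0[OF X])
  qed
  then show ?thesis
    using nn_integral_0_iff_AE[OF value_layer_measurable[OF X]] Vobj_eq_integral_value_layer[OF X]
    by simp
qed

lemma Vobj_less_gammastar:
  assumes \<gamma>: "\<gamma> = ereal g" and gt: "1/\<delta> < g" and not_attained: "\<forall>c\<in>{0<..<1}. \<zeta> c \<noteq> g"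
    and feasible: "feasible M \<rho> x X" and x: "x > 0"
  shows "Vobj m M X < ennreal g * ennreal x"
proof -
  have X: "X \<in> borel_measurable M" using feasible by (simp add: feasible_def)
  have "0 < 1/\<delta>" using delta_pos by simp
  with gt have g: "0 < g" by linarith
  show ?thesis
  proof (cases "AE t in lborel. ennreal g * cost_layer X t \<le> value_layer X t")
    case True
    then show ?thesis
      using Vobj_eq_0_if_AE_cost_layer_le[OF \<gamma> gt not_attained X] g x
      by (simp add: ennreal_mult[symmetric])
  next
    case False
    have "Vobj m M X = (\<integral>\<^sup>+t. value_layer X t \<partial>lborel)"
      by (rule Vobj_eq_integral_value_layer[OF X])
    also have "\<dots> < (\<integral>\<^sup>+t. ennreal g * cost_layer X t \<partial>lborel)"
    proof (rule nn_integral_less)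
      show "value_layer X \<in> borel_measurable lborel" by (rule value_layer_measurable[OF X])
      show "(\<lambda>t. ennreal g * cost_layer X t) \<in> borel_measurable lborel"
        using cost_layer_measurable[OF X] by measurable
      show "AE t in lborel. value_layer X t \<le> ennreal g * cost_layer X t"
        by (intro AE_I2) (use value_layer_le_cost_layer[OF \<gamma> X] gt in \<open>simp add: max_def\<close>)
      show "\<not> (AE t in lborel. ennreal g * cost_layer X t \<le> value_layer X t)"
        by (rule False)
      have "(\<integral>\<^sup>+t. value_layer X t \<partial>lborel) \<le> ennreal (max (1/\<delta>) g) * ennreal x"
        using Vobj_le_max[OF \<gamma> feasible] Vobj_eq_integral_value_layer[OF X] by simp
      then show "(\<integral>\<^sup>+t. value_layer X t \<partial>lborel) \<noteq> \<infinity>"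
        by (auto simp: ennreal_mult_eq_top_iff top_unique)
    qed
    also have "\<dots> = ennreal g * (\<integral>\<^sup>+t. cost_layer X t \<partial>lborel)"
      by (rule nn_integral_cmult[OF cost_layer_measurable[OF X]])
    also have "\<dots> \<le> ennreal g * ennreal x"
      by (intro mult_left_mono integral_cost_layer_le[OF feasible]) simp
    finally show ?thesis .
  qed
qed

lemma Vobj_digital_eq_zeta:
  assumes x: "x > 0" and c: "0 < c" "c < 1"
  shows "Vobj m M (digital M \<rho> x (Q (1 - c))) = ennreal (x * \<zeta> c)"
proof -
  have price_pos: "price (below (Q (1 - c))) > 0"
    using price_below_rquantile_pos[of "1 - c"] c by simp
  have "Vobj m M (digital M \<rho> x (Q (1 - c)))
      = ennreal (x / price (below (Q (1 - c)))) * emeasure m {c..1}"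
    using Vobj_digital[OF x, of "1 - c", OF _ _ sets_m] c by simp
  also have "\<dots> = ennreal (x / price (below (Q (1 - c))) * measure m {c..1})"
    using x price_pos by (simp add: m.emeasure_eq_measure ennreal_mult[symmetric])
  also have "x / price (below (Q (1 - c))) * measure m {c..1} = x * \<zeta> c"
    using measure_eq_zeta_price[OF c] price_pos by simp
  finally show ?thesis .
qed

lemma Vobj_constant:
  assumes a: "a > 0"
  shows "Vobj m M (\<lambda>_. a) = ennreal a"
proof -
  have "cdfX M (\<lambda>_. a) t = (if t < 0 then 0 else if t < a then 0 else 1)" for t
    using a by (auto simp: cdfX_def prob_space)
  then have "Vobj m M (\<lambda>_. a) = ennreal a * emeasure m {0..1}"
    using a by (intro Vobj_binary[OF _ _ _ a _ sets_m]) auto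
  then show ?thesis using measure_m_01 by (simp add: m.emeasure_eq_measure)
qed

lemma Vobj_le_optval: "feasible M \<rho> x X \<Longrightarrow> Vobj m M X \<le> optval m M \<rho> x"
  unfolding optval_def by (rule SUP_upper) simp

lemma optval_le: "(\<And>X. feasible M \<rho> x X \<Longrightarrow> Vobj m M X \<le> B) \<Longrightarrow> optval m M \<rho> x \<le> B"
  unfolding optval_def by (rule SUP_least) simp

lemma zeta_le_optval:
  assumes x: "x > 0" and c: "0 < c" "c < 1"
  shows "ennreal (x * \<zeta> c) \<le> optval m M \<rho> x"
  using Vobj_le_optval[OF digital_feasible[OF x, of "1 - c"]] Vobj_digital_eq_zeta[OF x c] c by simp

lemma gammastar_le_optval:
  assumes x: "x > 0" and optval: "optval m M \<rho> x = ennreal r" "0 \<le> r"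
  shows "\<gamma> \<le> ereal (r / x)"
  unfolding gammastar_def
proof (rule SUP_least)
  fix c :: real assume "c \<in> {0<..<1}"
  then have "x * \<zeta> c \<le> r" using zeta_le_optval[OF x, of c] optval by simp
  then show "ereal (\<zeta> c) \<le> ereal (r / x)" using x by (simp add: le_divide_eq mult.commute)
qed

lemma optval_eq_top:
  assumes x: "x > 0" and \<gamma>: "\<gamma> = \<infinity>"
  shows "optval m M \<rho> x = \<top>"
proof (rule ccontr)
  assume "optval m M \<rho> x \<noteq> \<top>"
  then obtain r where "optval m M \<rho> x = ennreal r" "0 \<le> r" by (cases "optval m M \<rho> x") auto
  then show False using gammastar_le_optval[OF x] \<gamma> by simp
qed

lemma optval_eq_max:
  assumes x: "x > 0" and \<gamma>: "\<gamma> = ereal g"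
  shows "optval m M \<rho> x = ennreal (max (1/\<delta>) g * x)"
proof (rule antisym)
  have max_nonneg: "0 \<le> max (1/\<delta>) g" using delta_pos by (simp add: le_max_iff_disj)
  show upper: "optval m M \<rho> x \<le> ennreal (max (1/\<delta>) g * x)"
    using Vobj_le_max[OF \<gamma>] max_nonneg x by (intro optval_le) (simp add: ennreal_mult)
  then obtain r where r: "optval m M \<rho> x = ennreal r" "0 \<le> r"
    by (cases "optval m M \<rho> x") (auto simp: top_unique)
  have "x / \<delta> \<le> r"
    using Vobj_le_optval[OF constant_feasible[OF x]] Vobj_constant[of "x / \<delta>"] x delta_pos r
    by (simp add: ennreal_le_iff)
  moreover have "g * x \<le> r"
    using gammastar_le_optval[OF x r] \<gamma> x by (simp add: le_divide_eq)
  ultimately show "ennreal (max (1/\<delta>) g * x) \<le> optval m M \<rho> x"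
    using r by (auto simp: max_def ennreal_leI)
qed

lemma enn2ereal_optval:
  assumes x: "x > 0"
  shows "enn2ereal (optval m M \<rho> x) = max (ereal (1/\<delta>)) \<gamma> * ereal x"
proof (cases "\<gamma> = \<infinity>")
  case True
  then show ?thesis using optval_eq_top[OF x] x by simp
next
  case False
  then obtain g where \<gamma>: "\<gamma> = ereal g" using gammastar_neq_MInf by (cases \<gamma>) auto
  have "0 \<le> max (1/\<delta>) g * x" using delta_pos x by (simp add: le_max_iff_disj)
  then show ?thesis using optval_eq_max[OF x \<gamma>] \<gamma> by (simp add: max_def)
qed

lemma exists_zeta_gt:
  assumes \<gamma>: "\<gamma> = \<infinity>" and c0: "c0 < 1"
  obtains c where "c0 < c" "c < 1" "R < \<zeta> c"
proof -
  define c1 where "c1 = max c0 (1/2)"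
  have c1: "0 < c1" "c1 < 1" "c0 \<le> c1" using c0 by (auto simp: c1_def)
  define R' where "R' = max R (1 / price (below (Q (1 - c1))))"
  have "ereal R' < \<gamma>" using \<gamma> by simp
  then obtain c where c: "0 < c" "c < 1" "R' < \<zeta> c"
    unfolding gammastar_def by (auto simp: less_SUP_iff)
  have "c1 < c"
  proof (rule ccontr)
    assume "\<not> c1 < c"
    then have "\<zeta> c \<le> 1 / price (below (Q (1 - c1)))"
      using zeta_le_inverse_price[OF c1(1,2), of c] c by simp
    with c(3) show False by (simp add: R'_def)
  qed
  then show ?thesis using c c1 by (intro that[of c]) (auto simp: R'_def)
qed

lemma quantile_one_minus_eq_rquantile:
  "0 < c \<Longrightarrow> c < 1 \<Longrightarrow> real_of_ereal (quantile M \<rho> (1 - c)) = Q (1 - c)"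
  by (simp add: quantile_eq_rquantile)

lemma digital_payoffs_unbounded:
  assumes x: "x > 0" and \<gamma>: "\<gamma> = \<infinity>"
  shows "\<exists>\<beta>::nat \<Rightarrow> real. (\<lambda>n. ereal (\<beta> n)) \<longlonglongrightarrow> essinf M \<rho>
            \<and> (\<forall>n. feasible M \<rho> x (digital M \<rho> x (\<beta> n)))
            \<and> (\<lambda>n. Vobj m M (digital M \<rho> x (\<beta> n))) \<longlonglongrightarrow> \<infinity>"
proof -
  have "\<exists>c. 1 - inverse (Suc n) < c \<and> c < 1 \<and> real n < \<zeta> c" for n
    using exists_zeta_gt[OF \<gamma>, of "1 - inverse (Suc n)" "real n"] by force
  then obtain c where c: "\<And>n. 1 - inverse (Suc n) < c n" "\<And>n. c n < 1" "\<And>n. real n < \<zeta> (c n)"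
    by metis
  have c_pos: "0 < c n" for n
    using c(1)[of n] by (simp add: inverse_le_1_iff le_less_trans[of 0 "1 - inverse (Suc n)"])
  define p where "p n = 1 - c n" for n
  have p: "0 < p n" "p n < 1" for n using c(2) c_pos by (auto simp: p_def)
  have p_lim: "p \<longlonglongrightarrow> 0"
  proof (rule tendsto_sandwich[OF _ _ tendsto_const LIMSEQ_inverse_real_of_nat])
    show "\<forall>\<^sub>F n in sequentially. 0 \<le> p n" using p by (simp add: less_imp_le)
    have "p n \<le> inverse (real (Suc n))" for n using c(1)[of n] unfolding p_def by linarith
    then show "\<forall>\<^sub>F n in sequentially. p n \<le> inverse (real (Suc n))" by simp
  qed
  moreover have "(\<lambda>n. Vobj m M (digital M \<rho> x (Q (p n)))) \<longlonglongrightarrow> \<infinity>"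
  proof -
    have "LIM n sequentially. \<zeta> (c n) :> at_top"
      using c(3) by (intro filterlim_at_top_mono[OF filterlim_real_sequentially]) (simp add: less_imp_le)
    then have "LIM n sequentially. x * \<zeta> (c n) :> at_top"
      by (rule filterlim_tendsto_pos_mult_at_top[OF tendsto_const x])
    then show ?thesis
      using Vobj_digital_eq_zeta[OF x c_pos c(2)] by (simp add: p_def ennreal_tendsto_top_eq_at_top)
  qed
  ultimately show ?thesis
    using rquantile_tendsto_essinf[OF rho_measurable, of p, OF p(1) p(2) p_lim] digital_feasible[OF x p]
    by (intro exI[of _ "\<lambda>n. Q (p n)"]) blast
qed

lemma constant_payoff_optimal:
  assumes x: "x > 0" and \<gamma>: "\<gamma> \<le> ereal (1/\<delta>)"
  shows "optimal m M \<rho> x (\<lambda>_. x / \<delta>)"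
proof -
  obtain g where \<gamma>_eq: "\<gamma> = ereal g" using \<gamma> gammastar_neq_MInf by (cases \<gamma>) auto
  then have "max (1/\<delta>) g = 1/\<delta>" using \<gamma> by simp
  then have "Vobj m M Y \<le> Vobj m M (\<lambda>_. x / \<delta>)" if "feasible M \<rho> x Y" for Y
    using Vobj_le_max[OF \<gamma>_eq that] Vobj_constant[of "x / \<delta>"] x delta_pos
    by (simp add: ennreal_mult[symmetric])
  then show ?thesis unfolding optimal_def using constant_feasible[OF x] by blast
qed

lemma digital_payoff_optimal:
  assumes x: "x > 0" and c: "c \<in> {0<..<1}" and gt: "ereal (1/\<delta>) < \<gamma>" and attained: "ereal (\<zeta> c) = \<gamma>"
  shows "optimal m M \<rho> x (digital M \<rho> x (real_of_ereal (quantile M \<rho> (1 - c))))"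
proof -
  have c': "0 < c" "c < 1" using c by auto
  have "1/\<delta> < \<zeta> c" using gt unfolding attained[symmetric] by simp
  then have "max (1/\<delta>) (\<zeta> c) = \<zeta> c" by simp
  then have "Vobj m M Y \<le> Vobj m M (digital M \<rho> x (Q (1 - c)))" if "feasible M \<rho> x Y" for Y
    using Vobj_le_max[OF attained[symmetric] that] Vobj_digital_eq_zeta[OF x c'] x zeta_nonneg[OF c']
    by (simp add: ennreal_mult[symmetric] mult.commute)
  then show ?thesis
    unfolding optimal_def quantile_one_minus_eq_rquantile[OF c']
    using digital_feasible[OF x, of "1 - c"] c' by auto
qed

lemma no_optimal_payoff:
  assumes x: "x > 0" and gt: "ereal (1/\<delta>) < \<gamma>" and lt: "\<gamma> < \<infinity>"
    and not_attained: "\<not> (\<exists>c\<in>{0<..<1}. ereal (\<zeta> c) = \<gamma>)"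
  shows "\<nexists>X. optimal m M \<rho> x X"
proof
  assume "\<exists>X. optimal m M \<rho> x X"
  then obtain X where X: "feasible M \<rho> x X" "\<And>Y. feasible M \<rho> x Y \<Longrightarrow> Vobj m M Y \<le> Vobj m M X"
    unfolding optimal_def by blast
  obtain g where \<gamma>: "\<gamma> = ereal g" using lt gammastar_neq_MInf by (cases \<gamma>) auto
  have "optval m M \<rho> x \<le> Vobj m M X" by (rule optval_le) (rule X(2))
  also have "\<dots> < ennreal g * ennreal x"
    using Vobj_less_gammastar[OF \<gamma> _ _ X(1) x] gt not_attained \<gamma> by auto
  also have "\<dots> = optval m M \<rho> x"
  proof -
    have "1/\<delta> < g" using gt \<gamma> by simp
    moreover have "0 < 1/\<delta>" using delta_pos by simp
    ultimately have "max (1/\<delta>) g = g" "0 \<le> g" by (simp, linarith)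
    then show ?thesis using optval_eq_max[OF x \<gamma>] x by (simp add: ennreal_mult)
  qed
  finally show False by simp
qed

lemma digital_quantile_feasible:
  assumes x: "x > 0" and c: "c \<in> {0<..<1}"
  shows "feasible M \<rho> x (digital M \<rho> x (real_of_ereal (quantile M \<rho> (1 - c))))"
  using digital_feasible[OF x, of "1 - c"] quantile_one_minus_eq_rquantile[of c] c by simp

lemma digital_payoffs_tendsto_optval:
  assumes x: "x > 0" and ge: "ereal (1/\<delta>) \<le> \<gamma>" and lt: "\<gamma> < \<infinity>"
    and c: "\<And>n. c n \<in> {0<..<1}" and lim: "(\<lambda>n. ereal (\<zeta> (c n))) \<longlonglongrightarrow> \<gamma>"
  shows "(\<lambda>n. Vobj m M (digital M \<rho> x (real_of_ereal (quantile M \<rho> (1 - c n)))))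
    \<longlonglongrightarrow> optval m M \<rho> x"
proof -
  obtain g where \<gamma>: "\<gamma> = ereal g" using lt gammastar_neq_MInf by (cases \<gamma>) auto
  have c': "0 < c n" "c n < 1" for n using c[of n] by auto
  have "(\<lambda>n. \<zeta> (c n)) \<longlonglongrightarrow> g" using lim \<gamma> by (simp add: lim_ereal)
  then have "(\<lambda>n. ennreal (x * \<zeta> (c n))) \<longlonglongrightarrow> ennreal (x * g)"
    by (intro tendsto_ennrealI tendsto_mult tendsto_const)
  moreover have "optval m M \<rho> x = ennreal (x * g)"
    using optval_eq_max[OF x \<gamma>] ge \<gamma> by (simp add: max_def mult.commute)
  ultimately show ?thesis
    by (simp add: quantile_one_minus_eq_rquantile[OF c'] Vobj_digital_eq_zeta[OF x c'])
qed

end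

theorem theorem1:
  fixes M :: "'a measure" and \<rho> :: "'a \<Rightarrow> real" and m :: "real measure" and x :: real
  assumes "prob_space M"
    and "\<rho> \<in> borel_measurable M"
    and "AE \<omega> in M. \<rho> \<omega> > 0"
    and "integrable M \<rho>"
    and "continuous_on UNIV (cdfX M \<rho>)"
    and "prob_space m" and "sets m = sets borel" and "measure m {0..1} = 1"
    and "x > 0"
  defines "\<delta> \<equiv> (\<integral>\<omega>. \<rho> \<omega> \<partial>M)"
    and "\<gamma> \<equiv> gammastar m M \<rho>"
  shows "enn2ereal (optval m M \<rho> x) = max (ereal (1 / \<delta>)) \<gamma> * ereal x
    \<and> (\<gamma> = \<infinity> \<longrightarrow> (\<exists>\<beta>::nat \<Rightarrow> real. (\<lambda>n. ereal (\<beta> n)) \<longlonglongrightarrow> essinf M \<rho>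
            \<and> (\<forall>n. feasible M \<rho> x (digital M \<rho> x (\<beta> n)))
            \<and> (\<lambda>n. Vobj m M (digital M \<rho> x (\<beta> n))) \<longlonglongrightarrow> \<infinity>))
    \<and> (\<gamma> \<le> ereal (1 / \<delta>) \<longrightarrow> optimal m M \<rho> x (\<lambda>_. x / \<delta>))
    \<and> (\<forall>c\<in>{0<..<1}. ereal (1 / \<delta>) < \<gamma> \<and> \<gamma> < \<infinity> \<and> ereal (zeta m M \<rho> c) = \<gamma>
          \<longrightarrow> optimal m M \<rho> x (digital M \<rho> x (real_of_ereal (quantile M \<rho> (1 - c)))))
    \<and> (ereal (1 / \<delta>) < \<gamma> \<and> \<gamma> < \<infinity> \<and> \<not> (\<exists>c\<in>{0<..<1}. ereal (zeta m M \<rho> c) = \<gamma>)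
          \<longrightarrow> (\<nexists>X. optimal m M \<rho> x X)
            \<and> (\<forall>cs::nat \<Rightarrow> real. (\<forall>n. cs n \<in> {0<..<1})
                  \<and> (\<lambda>n. ereal (zeta m M \<rho> (cs n))) \<longlonglongrightarrow> \<gamma>
               \<longrightarrow> (\<forall>n. feasible M \<rho> x (digital M \<rho> x (real_of_ereal (quantile M \<rho> (1 - cs n)))))
                 \<and> (\<lambda>n. Vobj m M (digital M \<rho> x (real_of_ereal (quantile M \<rho> (1 - cs n)))))
                      \<longlonglongrightarrow> optval m M \<rho> x))"
proof -
  interpret P: quantile_maximization M \<rho> m
    using assms by (simp add: quantile_maximization_def quantile_maximization_axioms_def
        pricing_kernel_def pricing_kernel_axioms_def)
  show ?thesis
    unfolding \<delta>_def \<gamma>_def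
    using P.enn2ereal_optval[OF \<open>x > 0\<close>] P.digital_payoffs_unbounded[OF \<open>x > 0\<close>]
      P.constant_payoff_optimal[OF \<open>x > 0\<close>] P.digital_payoff_optimal[OF \<open>x > 0\<close>]
      P.no_optimal_payoff[OF \<open>x > 0\<close>] P.digital_quantile_feasible[OF \<open>x > 0\<close>]
      P.digital_payoffs_tendsto_optval[OF \<open>x > 0\<close> less_imp_le]
    by (intro conjI impI allI ballI; (elim conjE)?; blast)
qed

end
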